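(* Let $G$ be a connected, locally finite Cayley graph of a group $\Gamma$, and let $r\in\mathbb{N}$. Then the $r$-local cover $G_r$ of $G$ is (isomorphic to) a connected, locally finite Cayley graph of a finitely presented group $\Gamma_r$ of which $\Gamma$ is a quotient.
   Context: $\mathrm{Cay}(\Gamma,S)$ (for $S\subseteq\Gamma$) has vertex set $\Gamma$, edge set $\{(g,s):g\in\Gamma,s\in S\}$, edge $(g,s)$ joining $g$ and $gs$; graphs may have loops and parallel edges and are viewed as 1-complexes. A cycle may be a loop or a pair of parallel edges; a closed walk once around a cycle $O$ traverses every edge of $O$ exactly once. For a connected graph $G$ and vertex $x_0$, $\pi_1^r(G,x_0)$ is the subgroup of $\pi_1(G,x_0)$ generated by the classes of closed walks $W_0QW_0^-$ with $W_0$ a walk from $x_0$ to a vertex $y$, $Q$ a closed walk at $y$ once around a cycle of length at most $r$, $W_0^-$ the reverse of $W_0$. The $r$-local covering $p_r:G_r\to G$ is the connected normal covering with characteristic subgroup $\pi_1^r(G,x_0)$, and $G_r$ is the $r$-local cover. *)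

theory Defs
  imports "HOL-Algebra.Algebra"
begin

text \<open>A graph is given by a vertex set, an edge set and, for each edge, its pair of
  end vertices (an orientation used only for bookkeeping; the graph is undirected,
  viewed as a 1-complex).\<close>

record ('v,'e) mgraph =
  verts :: "'v set"
  edges :: "'e set"
  ends  :: "'e \<Rightarrow> 'v \<times> 'v"

definition Cay :: "('a,'b) monoid_scheme \<Rightarrow> 'a set \<Rightarrow> ('a, 'a \<times> 'a) mgraph" where
  "Cay \<Gamma> S = \<lparr> verts = carrier \<Gamma>, edges = carrier \<Gamma> \<times> S,
                   ends = (\<lambda>(g,s). (g, g \<otimes>\<^bsub>\<Gamma>\<^esub> s)) \<rparr>"

text \<open>Darts: an edge together with a direction of traversal.\<close>

definition dtail :: "('v,'e,'z) mgraph_scheme \<Rightarrow> 'e \<times> bool \<Rightarrow> 'v" where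
  "dtail G d = (if snd d then fst (ends G (fst d)) else snd (ends G (fst d)))"

definition dhead :: "('v,'e,'z) mgraph_scheme \<Rightarrow> 'e \<times> bool \<Rightarrow> 'v" where
  "dhead G d = (if snd d then snd (ends G (fst d)) else fst (ends G (fst d)))"

definition flip :: "'e \<times> bool \<Rightarrow> 'e \<times> bool" where
  "flip d = (fst d, \<not> snd d)"

fun walk :: "('v,'e,'z) mgraph_scheme \<Rightarrow> 'v \<Rightarrow> ('e \<times> bool) list \<Rightarrow> 'v \<Rightarrow> bool" where
  "walk G x [] y \<longleftrightarrow> x \<in> verts G \<and> x = y"
| "walk G x (d # W) y \<longleftrightarrow> x \<in> verts G \<and> fst d \<in> edges G \<and> dtail G d = x
      \<and> walk G (dhead G d) W y"

definition rev_walk :: "('e \<times> bool) list \<Rightarrow> ('e \<times> bool) list" where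
  "rev_walk W = rev (map flip W)"

definition connected_graph :: "('v,'e,'z) mgraph_scheme \<Rightarrow> bool" where
  "connected_graph G \<longleftrightarrow> verts G \<noteq> {} \<and> (\<forall>x\<in>verts G. \<forall>y\<in>verts G. \<exists>W. walk G x W y)"

definition locally_finite :: "('v,'e,'z) mgraph_scheme \<Rightarrow> bool" where
  "locally_finite G \<longleftrightarrow> (\<forall>v\<in>verts G. finite {e\<in>edges G. fst (ends G e) = v \<or> snd (ends G e) = v})"

definition mg_iso :: "('v,'e,'z) mgraph_scheme \<Rightarrow> ('w,'f,'y) mgraph_scheme \<Rightarrow> bool" where
  "mg_iso G H \<longleftrightarrow> (\<exists>f g. bij_betw f (verts G) (verts H) \<and> bij_betw g (edges G) (edges H) \<and>
     (\<forall>e\<in>edges G. ends H (g e) = (f (fst (ends G e)), f (snd (ends G e)))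
                 \<or> ends H (g e) = (f (snd (ends G e)), f (fst (ends G e)))))"

text \<open>Homotopy of walks: equivalence generated by inserting/deleting backtracks.
  Homotopy classes of closed walks at x0 form pi_1(G,x0).\<close>

definition backtrack_step :: "('e \<times> bool) list \<Rightarrow> ('e \<times> bool) list \<Rightarrow> bool" where
  "backtrack_step A B \<longleftrightarrow> (\<exists>u v d. A = u @ [d, flip d] @ v \<and> B = u @ v)"

definition homotopic :: "('e \<times> bool) list \<Rightarrow> ('e \<times> bool) list \<Rightarrow> bool" where
  "homotopic = (\<lambda>A B. backtrack_step A B \<or> backtrack_step B A)\<^sup>*\<^sup>*"

text \<open>Q is a closed walk at y once around a cycle: a nonempty closed walk using distinct
  edges and visiting distinct vertices (covers loops, pairs of parallel edges, longer cycles).\<close>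

definition once_around :: "('v,'e,'z) mgraph_scheme \<Rightarrow> 'v \<Rightarrow> ('e \<times> bool) list \<Rightarrow> bool" where
  "once_around G y Q \<longleftrightarrow> walk G y Q y \<and> Q \<noteq> [] \<and> distinct (map fst Q) \<and> distinct (map (dhead G) Q)"

definition pi1r_gen :: "('v,'e,'z) mgraph_scheme \<Rightarrow> nat \<Rightarrow> 'v \<Rightarrow> ('e \<times> bool) list \<Rightarrow> bool" where
  "pi1r_gen G r x0 C \<longleftrightarrow> (\<exists>W0 y Q. walk G x0 W0 y \<and> once_around G y Q \<and> length Q \<le> r
       \<and> C = W0 @ Q @ rev_walk W0)"

text \<open>A closed walk at x0 represents an element of pi_1^r(G,x0), the subgroup generated by
  the classes of the generators: it is homotopic to a finite product of generators and their
  inverses (the empty product being the identity).\<close>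

definition in_pi1r :: "('v,'e,'z) mgraph_scheme \<Rightarrow> nat \<Rightarrow> 'v \<Rightarrow> ('e \<times> bool) list \<Rightarrow> bool" where
  "in_pi1r G r x0 W \<longleftrightarrow> walk G x0 W x0 \<and>
     (\<exists>cs. (\<forall>c\<in>set cs. pi1r_gen G r x0 c \<or> pi1r_gen G r x0 (rev_walk c)) \<and> homotopic W (concat cs))"

text \<open>The covering corresponding to the subgroup H = pi_1^r(G,x0) (standard construction):
  vertices are classes of walks from x0, two walks W, W' being identified iff they end at
  the same vertex and [W W'^-] lies in H; the lifts of an edge e at a class [W] (with W
  ending at the first end of e) join [W] and [W e].\<close>

definition cover_rel :: "('v,'e,'z) mgraph_scheme \<Rightarrow> nat \<Rightarrow> 'v \<Rightarrow> ('e \<times> bool) list \<Rightarrow> ('e \<times> bool) list \<Rightarrow> bool" where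
  "cover_rel G r x0 W W' \<longleftrightarrow> (\<exists>y. walk G x0 W y \<and> walk G x0 W' y \<and> in_pi1r G r x0 (W @ rev_walk W'))"

definition cover_class :: "('v,'e,'z) mgraph_scheme \<Rightarrow> nat \<Rightarrow> 'v \<Rightarrow> ('e \<times> bool) list \<Rightarrow> ('e \<times> bool) list set" where
  "cover_class G r x0 W = {W'. cover_rel G r x0 W W'}"

definition local_cover :: "('v,'e,'z) mgraph_scheme \<Rightarrow> nat \<Rightarrow> 'v
     \<Rightarrow> (('e \<times> bool) list set, ('e \<times> bool) list set \<times> 'e) mgraph" where
  "local_cover G r x0 = \<lparr>
     verts = {cover_class G r x0 W | W. \<exists>y. walk G x0 W y},
     edges = {(C, e). (\<exists>W\<in>C. \<exists>y. walk G x0 W y \<and> C = cover_class G r x0 W)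
                      \<and> e \<in> edges G \<and> (\<exists>W\<in>C. walk G x0 W (fst (ends G e)))},
     ends = (\<lambda>(C, e). (C, {W'. \<exists>W\<in>C. walk G x0 W (fst (ends G e))
                                 \<and> cover_rel G r x0 (W @ [(e, True)]) W'})) \<rparr>"

definition word_eval :: "('a,'b) monoid_scheme \<Rightarrow> ('a \<times> bool) list \<Rightarrow> 'a" where
  "word_eval \<Gamma> w = foldr (\<lambda>(a,b) acc. (if b then a else inv\<^bsub>\<Gamma>\<^esub> a) \<otimes>\<^bsub>\<Gamma>\<^esub> acc) w \<one>\<^bsub>\<Gamma>\<^esub>"

definition pres_step :: "('a \<times> bool) list set \<Rightarrow> ('a \<times> bool) list \<Rightarrow> ('a \<times> bool) list \<Rightarrow> bool" where
  "pres_step R A B \<longleftrightarrow> (\<exists>u v. B = u @ v \<and> ((\<exists>d. A = u @ [d, flip d] @ v) \<or> (\<exists>\<rho>\<in>R. A = u @ \<rho> @ v)))"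

definition pres_equiv :: "('a \<times> bool) list set \<Rightarrow> ('a \<times> bool) list \<Rightarrow> ('a \<times> bool) list \<Rightarrow> bool" where
  "pres_equiv R = (\<lambda>A B. pres_step R A B \<or> pres_step R B A)\<^sup>*\<^sup>*"

definition finitely_presented :: "('a,'b) monoid_scheme \<Rightarrow> bool" where
  "finitely_presented \<Gamma> \<longleftrightarrow> (\<exists>A R. finite A \<and> A \<subseteq> carrier \<Gamma> \<and> finite R \<and>
     (\<forall>\<rho>\<in>R. set \<rho> \<subseteq> A \<times> UNIV) \<and>
     (\<forall>g\<in>carrier \<Gamma>. \<exists>w. set w \<subseteq> A \<times> UNIV \<and> word_eval \<Gamma> w = g) \<and>
     (\<forall>w w'. set w \<subseteq> A \<times> UNIV \<longrightarrow> set w' \<subseteq> A \<times> UNIV \<longrightarrow>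
        (word_eval \<Gamma> w = word_eval \<Gamma> w' \<longleftrightarrow> pres_equiv R w w')))"

end

theory Submission
  imports Defs
begin

text \<open>Walks from \<open>x0\<close> in \<open>Cay(\<Gamma>, S)\<close> are determined by their words over \<open>S\<^sup>\<plusminus>\<close>, and homotopy
  of walks is free equality of words. A generator \<open>W0 Q W0\<^sup>-\<close> of \<open>\<pi>\<^sub>1\<^sup>r\<close> has as its word a conjugate
  of the word of a cycle of length at most \<open>r\<close>, and conversely, since left translations act
  transitively on the Cayley graph. Hence two walks ending at the same vertex define the same vertex
  of \<open>G\<^sub>r\<close> iff their words are equal in \<open>\<Gamma>\<^sub>r = \<langle>S | words of cycles of length \<le> r\<rangle>\<close>, a finite
  presentation because local finiteness makes \<open>S\<close> finite. So the vertices of \<open>G\<^sub>r\<close> form the group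
  \<open>\<Gamma>\<^sub>r\<close>, the lift of the edge \<open>(g, s)\<close> at a vertex \<open>C\<close> joins \<open>C\<close> to \<open>C s\<close>, whence
  \<open>G\<^sub>r \<cong> Cay(\<Gamma>\<^sub>r, S)\<close>; evaluating words in \<open>\<Gamma>\<close> kills the relators and gives the quotient map
  \<open>\<Gamma>\<^sub>r \<rightarrow> \<Gamma>\<close>, onto because \<open>Cay(\<Gamma>, S)\<close> is connected.\<close>

section \<open>Words and group presentations\<close>

lemma flip_flip [simp]: "flip (flip d) = d"
  by (simp add: flip_def)

lemma fst_flip [simp]: "fst (flip d) = fst d"
  by (simp add: flip_def)

lemma rev_walk_Nil [simp]: "rev_walk [] = []"
  by (simp add: rev_walk_def)

lemma rev_walk_Cons: "rev_walk (d # w) = rev_walk w @ [flip d]"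
  by (simp add: rev_walk_def)

lemma rev_walk_append [simp]: "rev_walk (a @ b) = rev_walk b @ rev_walk a"
  by (simp add: rev_walk_def)

lemma rev_walk_rev_walk [simp]: "rev_walk (rev_walk w) = w"
  by (simp add: rev_walk_def rev_map comp_def)

lemma rev_walk_concat: "rev_walk (concat cs) = concat (rev (map rev_walk cs))"
  by (induction cs) auto

lemma rev_walk_in_lists_iff [simp]: "rev_walk w \<in> lists (A \<times> UNIV) \<longleftrightarrow> w \<in> lists (A \<times> UNIV)"
  by (force simp: rev_walk_def flip_def)

lemma pres_equiv_induct [consumes 1, case_names refl sym trans step]:
  assumes "pres_equiv R a b"
    and "\<And>a. P a a" and "\<And>a b. P a b \<Longrightarrow> P b a" and "\<And>a b c. P a b \<Longrightarrow> P b c \<Longrightarrow> P a c"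
    and "\<And>a b. pres_step R a b \<Longrightarrow> P a b"
  shows "P a b"
  using assms(1) unfolding pres_equiv_def
  by (induction rule: rtranclp_induct) (use assms(2-5) in blast)+

lemma pres_equiv_refl [simp]: "pres_equiv R a a"
  by (simp add: pres_equiv_def)

lemma pres_equiv_sym: "pres_equiv R a b \<Longrightarrow> pres_equiv R b a"
  unfolding pres_equiv_def by (rule symp_rtranclp[unfolded symp_def, rule_format]) (auto simp: symp_def)

lemma pres_equiv_trans [trans]: "pres_equiv R a b \<Longrightarrow> pres_equiv R b c \<Longrightarrow> pres_equiv R a c"
  unfolding pres_equiv_def by (rule rtranclp_trans)

lemma pres_step_imp_pres_equiv: "pres_step R a b \<Longrightarrow> pres_equiv R a b"
  by (auto simp: pres_equiv_def)

lemma pres_equiv_cancel_pair: "pres_equiv R (u @ [d, flip d] @ v) (u @ v)"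
  by (rule pres_step_imp_pres_equiv) (unfold pres_step_def, blast)

lemma pres_equiv_relator: "\<rho> \<in> R \<Longrightarrow> pres_equiv R (u @ \<rho> @ v) (u @ v)"
  by (rule pres_step_imp_pres_equiv) (unfold pres_step_def, blast)

lemma pres_stepE:
  assumes "pres_step R a b"
  obtains u v d where "a = u @ [d, flip d] @ v" "b = u @ v"
    | u v \<rho> where "\<rho> \<in> R" "a = u @ \<rho> @ v" "b = u @ v"
  using assms unfolding pres_step_def by blast

lemma pres_equiv_cong: "pres_equiv R a b \<Longrightarrow> pres_equiv R (x @ a @ y) (x @ b @ y)"
proof (induction rule: pres_equiv_induct)
  case (step a b)
  then show ?case
  proof (cases rule: pres_stepE)
    case (1 u v d)
    then show ?thesis using pres_equiv_cancel_pair[of R "x @ u" d "v @ y"] by simp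
  next
    case (2 u v \<rho>)
    then show ?thesis using pres_equiv_relator[of \<rho> R "x @ u" "v @ y"] by simp
  qed
qed (blast intro: pres_equiv_refl pres_equiv_sym pres_equiv_trans)+

lemma pres_equiv_append: "pres_equiv R a b \<Longrightarrow> pres_equiv R c d \<Longrightarrow> pres_equiv R (a @ c) (b @ d)"
  using pres_equiv_cong[of R a b "[]" c] pres_equiv_cong[of R c d b "[]"] pres_equiv_trans by fastforce

lemma pres_equiv_mono:
  assumes "R \<subseteq> R'"
  shows "pres_equiv R a b \<Longrightarrow> pres_equiv R' a b"
proof (induction rule: pres_equiv_induct)
  case (step a b)
  then show ?case
  proof (cases rule: pres_stepE)
    case (1 u v d)
    then show ?thesis by (simp only: pres_equiv_cancel_pair)
  next
    case (2 u v \<rho>)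
    then show ?thesis using assms pres_equiv_relator[of \<rho> R' u v] by blast
  qed
qed (blast intro: pres_equiv_refl pres_equiv_sym pres_equiv_trans)+

lemma pres_equiv_map:
  assumes "\<And>x. f (flip x) = flip (f x)"
  shows "pres_equiv R a b \<Longrightarrow> pres_equiv (map f ` R) (map f a) (map f b)"
proof (induction rule: pres_equiv_induct)
  case (step a b)
  then show ?case
  proof (cases rule: pres_stepE)
    case (1 u v d)
    then show ?thesis using assms pres_equiv_cancel_pair[of _ "map f u" "f d" "map f v"] by simp
  next
    case (2 u v \<rho>)
    then show ?thesis using pres_equiv_relator[of "map f \<rho>" "map f ` R" "map f u" "map f v"] by simp
  qed
qed (blast intro: pres_equiv_refl pres_equiv_sym pres_equiv_trans)+

lemma map_apfst_in_lists: "w \<in> lists (A \<times> UNIV) \<Longrightarrow> map (apfst f) w \<in> lists (f ` A \<times> UNIV)"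
  by (induction w) auto

lemma apfst_flip: "apfst f (flip d) = flip (apfst f d)"
  by (simp add: flip_def apfst_def map_prod_def split: prod.split)

lemma pres_equiv_append_rev_walk: "pres_equiv R (w @ rev_walk w) []"
proof (induction w)
  case (Cons d w)
  have "pres_equiv R ([d] @ (w @ rev_walk w) @ [flip d]) ([d] @ [] @ [flip d])"
    by (rule pres_equiv_cong[OF Cons.IH])
  also have "pres_equiv R \<dots> []"
    using pres_equiv_cancel_pair[of R "[]" d "[]"] by simp
  finally show ?case by (simp add: rev_walk_Cons)
qed simp

lemma pres_equiv_rev_walk_append: "pres_equiv R (rev_walk w @ w) []"
  using pres_equiv_append_rev_walk[of R "rev_walk w"] by simp

lemma pres_equiv_iff_Nil: "pres_equiv R a b \<longleftrightarrow> pres_equiv R (a @ rev_walk b) []"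
proof
  assume "pres_equiv R a b"
  then have "pres_equiv R (a @ rev_walk b) (b @ rev_walk b)"
    by (rule pres_equiv_append) simp
  then show "pres_equiv R (a @ rev_walk b) []"
    using pres_equiv_append_rev_walk pres_equiv_trans by blast
next
  assume "pres_equiv R (a @ rev_walk b) []"
  then have "pres_equiv R ((a @ rev_walk b) @ b) ([] @ b)"
    by (rule pres_equiv_append) simp
  moreover have "pres_equiv R (a @ rev_walk b @ b) (a @ [])"
    by (rule pres_equiv_append) (simp_all add: pres_equiv_rev_walk_append)
  ultimately show "pres_equiv R a b"
    using pres_equiv_sym pres_equiv_trans by fastforce
qed

lemma pres_equiv_rev_walk: "pres_equiv R a b \<Longrightarrow> pres_equiv R (rev_walk a) (rev_walk b)"
proof -
  assume ab: "pres_equiv R a b"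
  have "pres_equiv R (rev_walk a @ []) (rev_walk a @ b @ rev_walk b)"
    by (rule pres_equiv_append) (simp_all add: pres_equiv_sym pres_equiv_append_rev_walk)
  also have "pres_equiv R \<dots> (rev_walk a @ a @ rev_walk b)"
    by (rule pres_equiv_cong) (rule pres_equiv_sym[OF ab])
  also have "pres_equiv R \<dots> ([] @ rev_walk b)"
    using pres_equiv_append[OF pres_equiv_rev_walk_append pres_equiv_refl] by simp
  finally show ?thesis by simp
qed

text \<open>Letters outside \<open>A\<close> can be erased from every intermediate word, so equivalence of
  words over \<open>A\<close> is generated by moves between words over \<open>A\<close>.\<close>
lemma pres_equiv_induct_lists [consumes 4, case_names refl sym trans cancel relator]:
  assumes "pres_equiv R a b" and R: "R \<subseteq> lists (A \<times> UNIV)"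
    and "a \<in> lists (A \<times> UNIV)" and "b \<in> lists (A \<times> UNIV)"
    and P_refl: "\<And>a. a \<in> lists (A \<times> UNIV) \<Longrightarrow> P a a"
    and P_sym: "\<And>a b. a \<in> lists (A \<times> UNIV) \<Longrightarrow> b \<in> lists (A \<times> UNIV) \<Longrightarrow> P a b \<Longrightarrow> P b a"
    and P_trans: "\<And>a b c. a \<in> lists (A \<times> UNIV) \<Longrightarrow> b \<in> lists (A \<times> UNIV) \<Longrightarrow> c \<in> lists (A \<times> UNIV)
      \<Longrightarrow> P a b \<Longrightarrow> P b c \<Longrightarrow> P a c"
    and P_cancel: "\<And>u v d. u \<in> lists (A \<times> UNIV) \<Longrightarrow> v \<in> lists (A \<times> UNIV) \<Longrightarrow> fst d \<in> A
      \<Longrightarrow> P (u @ [d, flip d] @ v) (u @ v)"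
    and P_relator: "\<And>u v \<rho>. u \<in> lists (A \<times> UNIV) \<Longrightarrow> v \<in> lists (A \<times> UNIV) \<Longrightarrow> \<rho> \<in> R
      \<Longrightarrow> P (u @ \<rho> @ v) (u @ v)"
  shows "P a b"
proof -
  let ?erase = "filter (\<lambda>x. fst x \<in> A)"
  have erase_id: "?erase w = w" if "w \<in> lists (A \<times> UNIV)" for w :: "('a \<times> bool) list"
    using that by (induction w) auto
  have erase_lists: "?erase w \<in> lists (A \<times> UNIV)" for w :: "('a \<times> bool) list"
    by auto
  have "P (?erase a) (?erase b)"
    using assms(1)
  proof (induction rule: pres_equiv_induct)
    case (step a b)
    then show ?case
    proof (cases rule: pres_stepE)
      case (1 u v d)
      show ?thesis
      proof (cases "fst d \<in> A")
        case True
        then show ?thesis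
          using 1 P_cancel[OF erase_lists erase_lists True, of u v] by simp
      next
        case False
        then show ?thesis
          using 1 P_refl[OF erase_lists, of "u @ v"] by simp
      qed
    next
      case (2 u v \<rho>)
      then have "?erase a = ?erase u @ \<rho> @ ?erase v"
        using erase_id[OF subsetD[OF R]] by simp
      then show ?thesis
        using 2 P_relator[OF erase_lists erase_lists] by simp
    qed
  next
    case (refl w)
    show ?case by (rule P_refl[OF erase_lists])
  next
    case (sym a b)
    then show ?case by (rule P_sym[OF erase_lists erase_lists])
  next
    case (trans a b c)
    then show ?case by (rule P_trans[OF erase_lists erase_lists erase_lists])
  qed
  then show ?thesis
    using assms(3,4) erase_id by simp
qed

definition relator_conjugates :: "'a set \<Rightarrow> ('a \<times> bool) list set \<Rightarrow> ('a \<times> bool) list set" where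
  "relator_conjugates A R =
     {u @ \<rho> @ rev_walk u | u \<rho>. u \<in> lists (A \<times> UNIV) \<and> (\<rho> \<in> R \<or> rev_walk \<rho> \<in> R)}"

lemma rev_walk_relator_conjugates:
  assumes "c \<in> relator_conjugates A R"
  shows "rev_walk c \<in> relator_conjugates A R"
proof -
  obtain u \<rho> where "c = u @ \<rho> @ rev_walk u" "u \<in> lists (A \<times> UNIV)" "\<rho> \<in> R \<or> rev_walk \<rho> \<in> R"
    using assms by (auto simp: relator_conjugates_def)
  then show ?thesis
    unfolding relator_conjugates_def by (intro CollectI exI[of _ u] exI[of _ "rev_walk \<rho>"]) auto
qed

lemma relator_conjugates_in_lists:
  assumes R: "R \<subseteq> lists (A \<times> UNIV)"
  shows "relator_conjugates A R \<subseteq> lists (A \<times> UNIV)"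
proof
  fix c
  assume "c \<in> relator_conjugates A R"
  then obtain u \<rho> where "c = u @ \<rho> @ rev_walk u" "u \<in> lists (A \<times> UNIV)" "\<rho> \<in> R \<or> rev_walk \<rho> \<in> R"
    by (auto simp: relator_conjugates_def)
  moreover have "\<rho> \<in> lists (A \<times> UNIV)"
    using calculation(3) R rev_walk_in_lists_iff by blast
  ultimately show "c \<in> lists (A \<times> UNIV)" by simp
qed

lemma pres_equiv_relator_conjugate_Nil:
  assumes "c \<in> relator_conjugates A R"
  shows "pres_equiv R c []"
proof -
  obtain u \<rho> where c: "c = u @ \<rho> @ rev_walk u" and \<rho>: "\<rho> \<in> R \<or> rev_walk \<rho> \<in> R"
    using assms by (auto simp: relator_conjugates_def)
  have rel_Nil: "pres_equiv R \<sigma> []" if "\<sigma> \<in> R" for \<sigma>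
    using pres_equiv_relator[OF that, of "[]" "[]"] by simp
  have "pres_equiv R \<rho> []"
    using \<rho> rel_Nil pres_equiv_rev_walk[OF rel_Nil, of "rev_walk \<rho>"] by auto
  then have "pres_equiv R (u @ \<rho> @ rev_walk u) (u @ [] @ rev_walk u)"
    by (rule pres_equiv_cong)
  then show ?thesis
    using c pres_equiv_append_rev_walk pres_equiv_trans by fastforce
qed

lemma free_conjugates_if_pres_equiv:
  assumes "pres_equiv R a b" and "R \<subseteq> lists (A \<times> UNIV)"
    and "a \<in> lists (A \<times> UNIV)" and "b \<in> lists (A \<times> UNIV)"
  shows "\<exists>cs. set cs \<subseteq> relator_conjugates A R \<and> pres_equiv {} (a @ rev_walk b) (concat cs)"
  using assms
proof (induction rule: pres_equiv_induct_lists)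
  case (refl a)
  show ?case
    by (intro exI[of _ "[]"]) (simp add: pres_equiv_append_rev_walk)
next
  case (sym a b)
  then obtain cs where "set cs \<subseteq> relator_conjugates A R" "pres_equiv {} (a @ rev_walk b) (concat cs)"
    by blast
  moreover from this(2) have "pres_equiv {} (b @ rev_walk a) (concat (rev (map rev_walk cs)))"
    using pres_equiv_rev_walk by (fastforce simp: rev_walk_concat)
  ultimately show ?case
    using rev_walk_relator_conjugates by (intro exI[of _ "rev (map rev_walk cs)"]) auto
next
  case (trans a b c)
  then obtain cs1 cs2 where cs: "set cs1 \<subseteq> relator_conjugates A R" "set cs2 \<subseteq> relator_conjugates A R"
    "pres_equiv {} (a @ rev_walk b) (concat cs1)" "pres_equiv {} (b @ rev_walk c) (concat cs2)"
    by blast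
  have "pres_equiv {} (a @ [] @ rev_walk c) (a @ (rev_walk b @ b) @ rev_walk c)"
    by (rule pres_equiv_cong, rule pres_equiv_sym, rule pres_equiv_rev_walk_append)
  also have "pres_equiv {} \<dots> (concat cs1 @ concat cs2)"
    using pres_equiv_append[OF cs(3,4)] by simp
  finally show ?case
    using cs(1,2) by (intro exI[of _ "cs1 @ cs2"]) auto
next
  case (cancel u v d)
  have "pres_equiv {} ((u @ [d, flip d] @ v) @ rev_walk (u @ v)) ((u @ v) @ rev_walk (u @ v))"
    by (rule pres_equiv_append, rule pres_equiv_cancel_pair, rule pres_equiv_refl)
  also have "pres_equiv {} \<dots> (concat [])"
    using pres_equiv_append_rev_walk[of "{}" "u @ v"] by simp
  finally show ?case by (intro exI[of _ "[]"]) simp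
next
  case (relator u v \<rho>)
  have "pres_equiv {} ((u @ \<rho>) @ (v @ rev_walk v) @ rev_walk u) ((u @ \<rho>) @ [] @ rev_walk u)"
    by (rule pres_equiv_cong, rule pres_equiv_append_rev_walk)
  moreover have "u @ \<rho> @ rev_walk u \<in> relator_conjugates A R"
    using relator by (auto simp: relator_conjugates_def)
  ultimately show ?case
    by (intro exI[of _ "[u @ \<rho> @ rev_walk u]"]) simp
qed

lemma pres_equiv_if_free_conjugates:
  assumes cs: "set cs \<subseteq> relator_conjugates A R" "pres_equiv {} (a @ rev_walk b) (concat cs)"
  shows "pres_equiv R a b"
proof -
  have "pres_equiv R (concat cs) []"
    using cs(1)
  proof (induction cs)
    case (Cons c cs)
    have "pres_equiv R (c @ concat cs) ([] @ [])"
      using Cons by (intro pres_equiv_append[OF pres_equiv_relator_conjugate_Nil]) auto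
    then show ?case by simp
  qed simp
  then have "pres_equiv R (a @ rev_walk b) []"
    by (rule pres_equiv_trans[OF pres_equiv_mono[OF empty_subsetI cs(2)]])
  then show ?thesis
    by (rule pres_equiv_iff_Nil[THEN iffD2])
qed

lemma pres_equiv_iff_conjugates:
  "R \<subseteq> lists (A \<times> UNIV) \<Longrightarrow> a \<in> lists (A \<times> UNIV) \<Longrightarrow> b \<in> lists (A \<times> UNIV) \<Longrightarrow>
    pres_equiv R a b \<longleftrightarrow>
    (\<exists>cs. set cs \<subseteq> relator_conjugates A R \<and> pres_equiv {} (a @ rev_walk b) (concat cs))"
  using free_conjugates_if_pres_equiv pres_equiv_if_free_conjugates by blast

section \<open>Walks in Cayley graphs\<close>

fun cay_walk :: "('a, 'b) monoid_scheme \<Rightarrow> 'a \<Rightarrow> ('a \<times> bool) list \<Rightarrow> (('a \<times> 'a) \<times> bool) list" where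
  "cay_walk G g [] = []"
| "cay_walk G g ((s, True) # w) = ((g, s), True) # cay_walk G (g \<otimes>\<^bsub>G\<^esub> s) w"
| "cay_walk G g ((s, False) # w) =
     ((g \<otimes>\<^bsub>G\<^esub> inv\<^bsub>G\<^esub> s, s), False) # cay_walk G (g \<otimes>\<^bsub>G\<^esub> inv\<^bsub>G\<^esub> s) w"

fun cay_walk_end :: "('a, 'b) monoid_scheme \<Rightarrow> 'a \<Rightarrow> ('a \<times> bool) list \<Rightarrow> 'a" where
  "cay_walk_end G g [] = g"
| "cay_walk_end G g ((s, True) # w) = cay_walk_end G (g \<otimes>\<^bsub>G\<^esub> s) w"
| "cay_walk_end G g ((s, False) # w) = cay_walk_end G (g \<otimes>\<^bsub>G\<^esub> inv\<^bsub>G\<^esub> s) w"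

lemma word_induct [case_names Nil Pos Neg]:
  assumes "P []" and "\<And>s w. P w \<Longrightarrow> P ((s, True) # w)" and "\<And>s w. P w \<Longrightarrow> P ((s, False) # w)"
  shows "P w"
proof (induction w)
  case (Cons x w)
  then show ?case
    using assms(2,3) by (cases x) (metis (full_types))
qed (rule assms(1))

definition walk_word :: "(('a \<times> 'a) \<times> bool) list \<Rightarrow> ('a \<times> bool) list" where
  "walk_word W = map (\<lambda>((g, s), b). (s, b)) W"

lemma cay_walk_append: "cay_walk G g (a @ b) = cay_walk G g a @ cay_walk G (cay_walk_end G g a) b"
  by (induction G g a rule: cay_walk.induct) auto

lemma cay_walk_end_append: "cay_walk_end G g (a @ b) = cay_walk_end G (cay_walk_end G g a) b"
  by (induction G g a rule: cay_walk_end.induct) auto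

lemma walk_word_cay_walk [simp]: "walk_word (cay_walk G g w) = w"
  by (induction G g w rule: cay_walk.induct) (auto simp: walk_word_def)

lemma length_cay_walk [simp]: "length (cay_walk G g w) = length w"
  by (induction G g w rule: cay_walk.induct) auto

lemma walk_word_Nil [simp]: "walk_word [] = []"
  by (simp add: walk_word_def)

lemma walk_word_append [simp]: "walk_word (a @ b) = walk_word a @ walk_word b"
  by (simp add: walk_word_def)

lemma length_walk_word [simp]: "length (walk_word W) = length W"
  by (simp add: walk_word_def)

lemma walk_word_rev_walk: "walk_word (rev_walk W) = rev_walk (walk_word W)"
  by (auto simp: walk_word_def rev_walk_def flip_def rev_map split: prod.split)

lemma walk_word_concat: "walk_word (concat Ws) = concat (map walk_word Ws)"
  by (induction Ws) auto

lemma verts_Cay [simp]: "verts (Cay G S) = carrier G"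
  and edges_Cay [simp]: "edges (Cay G S) = carrier G \<times> S"
  and ends_Cay [simp]: "ends (Cay G S) (g, s) = (g, g \<otimes>\<^bsub>G\<^esub> s)"
  by (simp_all add: Cay_def)

lemma walk_edges: "walk G x W y \<Longrightarrow> D \<in> set W \<Longrightarrow> fst D \<in> edges G"
  by (induction W arbitrary: x) auto

lemma walk_start: "walk G x W y \<Longrightarrow> x \<in> verts G"
  by (cases W) auto

lemma finite_if_locally_finite_Cay:
  assumes "locally_finite (Cay G S)" and "g \<in> carrier G"
  shows "finite S"
proof -
  have "(\<lambda>s. (g, s)) ` S \<subseteq> {e \<in> edges (Cay G S). fst (ends (Cay G S) e) = g \<or> snd (ends (Cay G S) e) = g}"
    using assms(2) by (auto simp: Cay_def)
  then have "finite ((\<lambda>s. (g, s)) ` S)"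
    using assms unfolding locally_finite_def by (auto simp: Cay_def intro: finite_subset)
  then show ?thesis
    by (rule finite_imageD) (simp add: inj_on_def)
qed

lemma homotopic_refl [simp]: "homotopic A A"
  by (simp add: homotopic_def)

lemma homotopic_sym: "homotopic A B \<Longrightarrow> homotopic B A"
  unfolding homotopic_def by (rule symp_rtranclp[unfolded symp_def, rule_format]) (auto simp: symp_def)

lemma homotopic_trans: "homotopic A B \<Longrightarrow> homotopic B C \<Longrightarrow> homotopic A C"
  unfolding homotopic_def by (rule rtranclp_trans)

lemma homotopic_cancel_pair: "homotopic (U @ [D, flip D] @ V) (U @ V)"
  unfolding homotopic_def backtrack_step_def by (rule r_into_rtranclp) blast

lemma pres_equiv_walk_word_if_homotopic:
  "homotopic A B \<Longrightarrow> pres_equiv {} (walk_word A) (walk_word B)"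
  unfolding homotopic_def
proof (induction rule: rtranclp_induct)
  case (step B C)
  have "pres_equiv {} (walk_word B) (walk_word C)" if bt: "backtrack_step B C" for B C
  proof -
    obtain U V D where "B = U @ [D, flip D] @ V" "C = U @ V"
      using bt unfolding backtrack_step_def by blast
    moreover obtain g s b where "D = ((g, s), b)"
      by (metis prod.collapse)
    ultimately show ?thesis
      using pres_equiv_cancel_pair[of "{}" "walk_word U" "(s, b)" "walk_word V"]
      by (simp add: walk_word_def flip_def)
  qed
  then show ?case
    using step pres_equiv_sym pres_equiv_trans by blast
qed simp

context group
begin

lemma word_eval_Nil [simp]: "word_eval G [] = \<one>"
  by (simp add: word_eval_def)

lemma word_eval_Cons [simp]: "word_eval G ((s, b) # w) = (if b then s else inv s) \<otimes> word_eval G w"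
  by (simp add: word_eval_def)

lemma word_eval_closed: "w \<in> lists (carrier G \<times> UNIV) \<Longrightarrow> word_eval G w \<in> carrier G"
  by (induction w) auto

lemma word_eval_append:
  "a \<in> lists (carrier G \<times> UNIV) \<Longrightarrow> b \<in> lists (carrier G \<times> UNIV) \<Longrightarrow>
    word_eval G (a @ b) = word_eval G a \<otimes> word_eval G b"
  by (induction a rule: word_induct) (auto simp: m_assoc word_eval_closed in_lists_conv_set)

lemma word_eval_Cons_flip:
  "fst d \<in> carrier G \<Longrightarrow> w \<in> lists (carrier G \<times> UNIV) \<Longrightarrow> word_eval G (d # flip d # w) = word_eval G w"
  by (cases d) (auto simp: flip_def m_assoc[symmetric] word_eval_closed)

lemma word_eval_eq_if_pres_equiv:
  assumes "pres_equiv R a b" and R: "R \<subseteq> lists (A \<times> UNIV)"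
    and "a \<in> lists (A \<times> UNIV)" and "b \<in> lists (A \<times> UNIV)"
    and A: "A \<subseteq> carrier G" and R_eval: "\<And>\<rho>. \<rho> \<in> R \<Longrightarrow> word_eval G \<rho> = \<one>"
  shows "word_eval G a = word_eval G b"
  using assms(1-4)
proof (induction rule: pres_equiv_induct_lists)
  case (cancel u v d)
  have lists: "u \<in> lists (carrier G \<times> UNIV)" "v \<in> lists (carrier G \<times> UNIV)"
    "d # flip d # v \<in> lists (carrier G \<times> UNIV)"
    using cancel A by (auto simp: flip_def mem_Times_iff)
  with cancel A show ?case
    by (simp add: word_eval_append word_eval_Cons_flip subsetD)
next
  case (relator u v \<rho>)
  have lists: "u \<in> lists (carrier G \<times> UNIV)" "v \<in> lists (carrier G \<times> UNIV)"
    "\<rho> \<in> lists (carrier G \<times> UNIV)"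
    using relator R A by auto
  with relator show ?case
    by (simp add: word_eval_append word_eval_closed R_eval)
qed simp_all

lemma cay_walk_end_eq:
  "g \<in> carrier G \<Longrightarrow> w \<in> lists (carrier G \<times> UNIV) \<Longrightarrow> cay_walk_end G g w = g \<otimes> word_eval G w"
  by (induction w arbitrary: g rule: word_induct) (auto simp: m_assoc word_eval_closed in_lists_conv_set)

lemma cay_walk_end_closed:
  "g \<in> carrier G \<Longrightarrow> w \<in> lists (carrier G \<times> UNIV) \<Longrightarrow> cay_walk_end G g w \<in> carrier G"
  by (simp add: cay_walk_end_eq word_eval_closed)

lemma cay_walk_end_rev_walk:
  "g \<in> carrier G \<Longrightarrow> w \<in> lists (carrier G \<times> UNIV) \<Longrightarrow>
    cay_walk_end G (cay_walk_end G g w) (rev_walk w) = g"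
  by (induction w arbitrary: g rule: word_induct)
    (auto simp: rev_walk_Cons cay_walk_end_append flip_def m_assoc)

lemma rev_walk_cay_walk:
  "g \<in> carrier G \<Longrightarrow> w \<in> lists (carrier G \<times> UNIV) \<Longrightarrow>
    rev_walk (cay_walk G g w) = cay_walk G (cay_walk_end G g w) (rev_walk w)"
  by (induction w arbitrary: g rule: word_induct)
    (auto simp: rev_walk_Cons cay_walk_append cay_walk_end_rev_walk flip_def m_assoc)

lemma walk_cay_walk:
  "S \<subseteq> carrier G \<Longrightarrow> g \<in> carrier G \<Longrightarrow> w \<in> lists (S \<times> UNIV) \<Longrightarrow>
    walk (Cay G S) g (cay_walk G g w) (cay_walk_end G g w)"
  by (induction w arbitrary: g rule: word_induct)
    (auto simp: dtail_def dhead_def Cay_def m_assoc subsetD)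

lemma walk_CayD:
  assumes "S \<subseteq> carrier G" and "walk (Cay G S) g W y"
  shows "walk_word W \<in> lists (S \<times> UNIV)" and "W = cay_walk G g (walk_word W)"
    and "y = cay_walk_end G g (walk_word W)"
  using assms(2) unfolding atomize_conj
proof (induction W arbitrary: g)
  case (Cons D W)
  obtain a s b where D: "D = ((a, s), b)"
    by (metis prod.collapse)
  have s: "s \<in> S" "s \<in> carrier G" and a: "a \<in> carrier G"
    using Cons.prems D assms(1) by (auto simp: Cay_def)
  show ?case
  proof (cases b)
    case True
    then show ?thesis
      using Cons s D by (auto simp: dtail_def dhead_def Cay_def walk_word_def)
  next
    case False
    then have "a = g \<otimes> inv s"
      using Cons.prems D s a by (auto simp: dtail_def Cay_def m_assoc)
    then show ?thesis
      using Cons s D False by (auto simp: dtail_def dhead_def Cay_def walk_word_def)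
  qed
qed (simp add: walk_word_def)

lemma inj_on_left_mult: "h \<in> carrier G \<Longrightarrow> A \<subseteq> carrier G \<Longrightarrow> inj_on ((\<otimes>) h) A"
  by (intro inj_onI) (meson l_cancel subsetD)

lemma cay_walk_left_mult:
  "h \<in> carrier G \<Longrightarrow> g \<in> carrier G \<Longrightarrow> w \<in> lists (carrier G \<times> UNIV) \<Longrightarrow>
    cay_walk G (h \<otimes> g) w = map (apfst (apfst ((\<otimes>) h))) (cay_walk G g w)"
  by (induction w arbitrary: g rule: word_induct) (auto simp: m_assoc)

lemma cay_walk_Cons_flip:
  assumes "g \<in> carrier G" and "fst d \<in> carrier G"
  obtains D where "cay_walk G g (d # flip d # w) = D # flip D # cay_walk G g w"
proof -
  obtain s b where d: "d = (s, b)"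
    by force
  show thesis
  proof (cases b)
    case True
    then show thesis
      using that[of "((g, s), True)"] assms d by (simp add: flip_def m_assoc)
  next
    case False
    then show thesis
      using that[of "((g \<otimes> inv s, s), False)"] assms d by (simp add: flip_def m_assoc)
  qed
qed

lemma dtail_dhead_left_mult:
  assumes "S \<subseteq> carrier G" and "h \<in> carrier G" and "fst D \<in> carrier G \<times> S"
  shows "dtail (Cay G S) (apfst (apfst ((\<otimes>) h)) D) = h \<otimes> dtail (Cay G S) D"
    and "dhead (Cay G S) (apfst (apfst ((\<otimes>) h)) D) = h \<otimes> dhead (Cay G S) D"
  using assms by (cases D, auto simp: dtail_def dhead_def m_assoc subsetD)+

lemma walk_left_mult:
  assumes S: "S \<subseteq> carrier G" and h: "h \<in> carrier G"
  shows "walk (Cay G S) x W y \<Longrightarrow> walk (Cay G S) (h \<otimes> x) (map (apfst (apfst ((\<otimes>) h))) W) (h \<otimes> y)"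
proof (induction W arbitrary: x)
  case (Cons D W)
  then show ?case
    using dtail_dhead_left_mult[OF S h] h by (cases D) auto
qed (simp add: h)

lemma once_around_left_mult:
  assumes S: "S \<subseteq> carrier G" and Q: "once_around (Cay G S) y Q" and h: "h \<in> carrier G"
  shows "once_around (Cay G S) (h \<otimes> y) (map (apfst (apfst ((\<otimes>) h))) Q)"
proof -
  let ?tr = "apfst (apfst ((\<otimes>) h))"
  have closed: "walk (Cay G S) y Q y" and "Q \<noteq> []"
    and dist_edges: "distinct (map fst Q)" and dist_heads: "distinct (map (dhead (Cay G S)) Q)"
    using Q by (auto simp: once_around_def)
  have edge: "fst D \<in> carrier G \<times> S" if "D \<in> set Q" for D
    using walk_edges[OF closed that] by simp
  have "set (map fst Q) \<subseteq> carrier G \<times> UNIV"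
    using edge by auto
  then have "inj_on (apfst ((\<otimes>) h)) (set (map fst Q))"
    by (rule inj_on_subset[OF inj_on_apfst[THEN iffD2, OF inj_on_left_mult[OF h subset_refl]]])
  then have "distinct (map (apfst ((\<otimes>) h)) (map fst Q))"
    using dist_edges distinct_map by blast
  then have "distinct (map fst (map ?tr Q))"
    by (simp add: comp_def)
  moreover have "map (dhead (Cay G S)) (map ?tr Q) = map ((\<otimes>) h) (map (dhead (Cay G S)) Q)"
    using dtail_dhead_left_mult(2)[OF S h edge] by simp
  moreover have "set (map (dhead (Cay G S)) Q) \<subseteq> carrier G"
    using edge S by (auto simp: dhead_def subsetD)
  then have "inj_on ((\<otimes>) h) (set (map (dhead (Cay G S)) Q))"
    by (rule inj_on_left_mult[OF h])
  ultimately show ?thesis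
    using walk_left_mult[OF S h closed] \<open>Q \<noteq> []\<close> dist_heads distinct_map
    unfolding once_around_def by (metis Nil_is_map_conv)
qed

lemma once_around_cay_walk:
  assumes S: "S \<subseteq> carrier G" and Q: "once_around (Cay G S) y0 Q" and y: "y \<in> carrier G"
  shows "once_around (Cay G S) y (cay_walk G y (walk_word Q))"
proof -
  let ?w = "walk_word Q" and ?h = "y \<otimes> inv y0"
  have closed: "walk (Cay G S) y0 Q y0"
    using Q by (simp add: once_around_def)
  then have y0: "y0 \<in> carrier G" and h: "?h \<in> carrier G" and "?h \<otimes> y0 = y"
    using walk_start[OF closed] y by (auto simp: m_assoc)
  moreover have "Q = cay_walk G y0 ?w" and "?w \<in> lists (carrier G \<times> UNIV)"
    using walk_CayD[OF S closed] S by auto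
  ultimately have "cay_walk G y ?w = map (apfst (apfst ((\<otimes>) ?h))) Q"
    using cay_walk_left_mult[OF h y0] by metis
  then show ?thesis
    using once_around_left_mult[OF S Q h] \<open>?h \<otimes> y0 = y\<close> by simp
qed

text \<open>Free cancellation in the word of a walk is a backtrack of the walk.\<close>
lemma homotopic_cay_walk_if_pres_equiv:
  assumes "pres_equiv {} a b" and "a \<in> lists (carrier G \<times> UNIV)" and "b \<in> lists (carrier G \<times> UNIV)"
    and g: "g \<in> carrier G"
  shows "homotopic (cay_walk G g a) (cay_walk G g b)"
  using assms(1) empty_subsetI assms(2,3)
proof (induction rule: pres_equiv_induct_lists)
  case (cancel u v d)
  obtain D where "cay_walk G (cay_walk_end G g u) (d # flip d # v)
      = D # flip D # cay_walk G (cay_walk_end G g u) v"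
    using cay_walk_Cons_flip cay_walk_end_closed[OF g cancel(1)] cancel(3) by blast
  then show ?case
    using homotopic_cancel_pair[of "cay_walk G g u" D] by (simp add: cay_walk_append)
qed (auto intro: homotopic_sym homotopic_trans)

lemma connected_Cay_if_generates:
  assumes T: "T \<subseteq> carrier G"
    and generates: "\<And>x. x \<in> carrier G \<Longrightarrow> \<exists>w \<in> lists (T \<times> UNIV). word_eval G w = x"
  shows "connected_graph (Cay G T)"
  unfolding connected_graph_def
proof (intro conjI ballI)
  fix x y
  assume "x \<in> verts (Cay G T)" "y \<in> verts (Cay G T)"
  then have xy: "x \<in> carrier G" "y \<in> carrier G"
    by (auto simp: Cay_def)
  then obtain w where w: "w \<in> lists (T \<times> UNIV)" "word_eval G w = inv x \<otimes> y"
    using generates[of "inv x \<otimes> y"] by auto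
  then have "cay_walk_end G x w = y"
    using cay_walk_end_eq[OF xy(1)] T xy lists_mono by (fastforce simp: m_assoc[symmetric])
  then show "\<exists>W. walk (Cay G T) x W y"
    using walk_cay_walk[OF T xy(1) w(1)] by auto
qed (auto simp: Cay_def)

lemma locally_finite_Cay:
  assumes T: "T \<subseteq> carrier G" "finite T"
  shows "locally_finite (Cay G T)"
  unfolding locally_finite_def
proof
  fix v
  assume "v \<in> verts (Cay G T)"
  have "{e \<in> edges (Cay G T). fst (ends (Cay G T) e) = v \<or> snd (ends (Cay G T) e) = v}
      \<subseteq> (\<lambda>s. (v, s)) ` T \<union> (\<lambda>s. (v \<otimes> inv s, s)) ` T"
    using T by (force simp: Cay_def m_assoc)
  then show "finite {e \<in> edges (Cay G T). fst (ends (Cay G T) e) = v \<or> snd (ends (Cay G T) e) = v}"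
    using T by (meson finite_Un finite_imageI finite_subset)
qed

end

section \<open>The \<open>r\<close>-local cover as a Cayley graph\<close>

locale cayley_local_cover = group \<Gamma> for \<Gamma> :: "'a monoid" (structure) +
  fixes S :: "'a set" and r :: nat and x0 :: 'a
  assumes S_subset: "S \<subseteq> carrier \<Gamma>" and x0_closed: "x0 \<in> carrier \<Gamma>"
begin

lemma lists_S_carrier: "w \<in> lists (S \<times> UNIV) \<Longrightarrow> w \<in> lists (carrier \<Gamma> \<times> UNIV)"
  using S_subset by auto

definition cycle_relators :: "('a \<times> bool) list set" where
  "cycle_relators = {walk_word Q | Q y. once_around (Cay \<Gamma> S) y Q \<and> length Q \<le> r}"

lemma cycle_relators_in_lists: "cycle_relators \<subseteq> lists (S \<times> UNIV)"
  using walk_CayD[OF S_subset] by (force simp: cycle_relators_def once_around_def)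

lemma length_cycle_relator: "\<rho> \<in> cycle_relators \<Longrightarrow> length \<rho> \<le> r"
  by (auto simp: cycle_relators_def)

lemma once_around_cycle_relator:
  "\<rho> \<in> cycle_relators \<Longrightarrow> y \<in> carrier \<Gamma> \<Longrightarrow> once_around (Cay \<Gamma> S) y (cay_walk \<Gamma> y \<rho>)"
  using once_around_cay_walk[OF S_subset] by (auto simp: cycle_relators_def)

lemma cay_walk_end_cycle_relator:
  "\<rho> \<in> cycle_relators \<Longrightarrow> y \<in> carrier \<Gamma> \<Longrightarrow> cay_walk_end \<Gamma> y \<rho> = y"
  using once_around_cycle_relator walk_CayD[OF S_subset] by (fastforce simp: once_around_def)

lemma cay_walk_end_rev_walk_cycle_relator:
  assumes "\<rho> \<in> cycle_relators" and "y \<in> carrier \<Gamma>"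
  shows "cay_walk_end \<Gamma> y (rev_walk \<rho>) = y"
proof -
  have "\<rho> \<in> lists (carrier \<Gamma> \<times> UNIV)"
    using assms(1) cycle_relators_in_lists lists_S_carrier by blast
  then show ?thesis
    using cay_walk_end_rev_walk[OF assms(2)] cay_walk_end_cycle_relator[OF assms] by metis
qed

lemma word_eval_cycle_relator: "\<rho> \<in> cycle_relators \<Longrightarrow> word_eval \<Gamma> \<rho> = \<one>"
  using cay_walk_end_cycle_relator[OF _ one_closed] cay_walk_end_eq[OF one_closed]
    cycle_relators_in_lists lists_S_carrier by (fastforce simp: word_eval_closed)

lemma finite_cycle_relators: "finite S \<Longrightarrow> finite cycle_relators"
proof -
  assume "finite S"
  then have "finite {w. set w \<subseteq> S \<times> (UNIV :: bool set) \<and> length w \<le> r}"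
    by (intro finite_lists_length_le) simp
  moreover have "cycle_relators \<subseteq> {w. set w \<subseteq> S \<times> UNIV \<and> length w \<le> r}"
    using cycle_relators_in_lists length_cycle_relator by auto
  ultimately show ?thesis
    by (rule finite_subset[rotated])
qed

lemma word_eval_eq_if_pres_equiv_cycle_relators:
  "pres_equiv cycle_relators w w' \<Longrightarrow> w \<in> lists (S \<times> UNIV) \<Longrightarrow> w' \<in> lists (S \<times> UNIV) \<Longrightarrow>
    word_eval \<Gamma> w = word_eval \<Gamma> w'"
  using word_eval_eq_if_pres_equiv cycle_relators_in_lists S_subset word_eval_cycle_relator by blast

lemma cay_walk_end_eq_if_pres_equiv_cycle_relators:
  "pres_equiv cycle_relators w w' \<Longrightarrow> w \<in> lists (S \<times> UNIV) \<Longrightarrow> w' \<in> lists (S \<times> UNIV) \<Longrightarrow>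
    g \<in> carrier \<Gamma> \<Longrightarrow> cay_walk_end \<Gamma> g w = cay_walk_end \<Gamma> g w'"
  using word_eval_eq_if_pres_equiv_cycle_relators cay_walk_end_eq lists_S_carrier by metis

lemma walk_word_pi1r_gen:
  assumes "pi1r_gen (Cay \<Gamma> S) r x0 C"
  shows "walk_word C \<in> relator_conjugates S cycle_relators"
proof -
  obtain W0 y Q where W0: "walk (Cay \<Gamma> S) x0 W0 y" and Q: "once_around (Cay \<Gamma> S) y Q" "length Q \<le> r"
    and C: "C = W0 @ Q @ rev_walk W0"
    using assms unfolding pi1r_gen_def by blast
  have "walk_word Q \<in> cycle_relators"
    using Q unfolding cycle_relators_def by blast
  moreover have "walk_word W0 \<in> lists (S \<times> UNIV)"
    using walk_CayD[OF S_subset W0] by blast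
  ultimately show ?thesis
    using C by (auto simp: relator_conjugates_def walk_word_rev_walk)
qed

lemma cay_walk_end_relator_conjugate:
  assumes "c \<in> relator_conjugates S cycle_relators" and g: "g \<in> carrier \<Gamma>"
  shows "cay_walk_end \<Gamma> g c = g"
proof -
  obtain u \<rho> where c: "c = u @ \<rho> @ rev_walk u" and u: "u \<in> lists (S \<times> UNIV)"
    and \<rho>: "\<rho> \<in> cycle_relators \<or> rev_walk \<rho> \<in> cycle_relators"
    using assms(1) by (auto simp: relator_conjugates_def)
  define z where "z = cay_walk_end \<Gamma> g u"
  have z: "z \<in> carrier \<Gamma>"
    unfolding z_def using cay_walk_end_closed[OF g lists_S_carrier[OF u]] .
  have "cay_walk_end \<Gamma> z \<rho> = z"
    using \<rho> cay_walk_end_cycle_relator[OF _ z] cay_walk_end_rev_walk_cycle_relator[OF _ z, of "rev_walk \<rho>"]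
    by auto
  then show ?thesis
    using cay_walk_end_rev_walk[OF g lists_S_carrier[OF u]] c
    by (simp add: cay_walk_end_append z_def)
qed

lemma pi1r_gen_cay_walk_conjugate:
  assumes u: "u \<in> lists (S \<times> UNIV)" and \<rho>: "\<rho> \<in> cycle_relators"
  shows "pi1r_gen (Cay \<Gamma> S) r x0 (cay_walk \<Gamma> x0 (u @ \<rho> @ rev_walk u))"
proof -
  define y where "y = cay_walk_end \<Gamma> x0 u"
  have y: "y \<in> carrier \<Gamma>"
    unfolding y_def using cay_walk_end_closed[OF x0_closed lists_S_carrier[OF u]] .
  have "cay_walk \<Gamma> x0 (u @ \<rho> @ rev_walk u)
      = cay_walk \<Gamma> x0 u @ cay_walk \<Gamma> y \<rho> @ rev_walk (cay_walk \<Gamma> x0 u)"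
    using rev_walk_cay_walk[OF x0_closed lists_S_carrier[OF u]] cay_walk_end_cycle_relator[OF \<rho> y]
    by (simp add: cay_walk_append y_def)
  moreover have "walk (Cay \<Gamma> S) x0 (cay_walk \<Gamma> x0 u) y"
    unfolding y_def using walk_cay_walk[OF S_subset x0_closed u] .
  ultimately show ?thesis
    unfolding pi1r_gen_def
    using once_around_cycle_relator[OF \<rho> y] length_cycle_relator[OF \<rho>]
    by (intro exI[of _ "cay_walk \<Gamma> x0 u"] exI[of _ y] exI[of _ "cay_walk \<Gamma> y \<rho>"]) simp
qed

lemma pi1r_gen_cay_walk:
  assumes c: "c \<in> relator_conjugates S cycle_relators"
  shows "pi1r_gen (Cay \<Gamma> S) r x0 (cay_walk \<Gamma> x0 c) \<or> pi1r_gen (Cay \<Gamma> S) r x0 (rev_walk (cay_walk \<Gamma> x0 c))"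
proof -
  obtain u \<rho> where c_eq: "c = u @ \<rho> @ rev_walk u" and u: "u \<in> lists (S \<times> UNIV)"
    and \<rho>: "\<rho> \<in> cycle_relators \<or> rev_walk \<rho> \<in> cycle_relators"
    using c by (auto simp: relator_conjugates_def)
  have "c \<in> lists (carrier \<Gamma> \<times> UNIV)"
    using c relator_conjugates_in_lists[OF cycle_relators_in_lists] lists_S_carrier by blast
  then have "rev_walk (cay_walk \<Gamma> x0 c) = cay_walk \<Gamma> x0 (u @ rev_walk \<rho> @ rev_walk u)"
    using rev_walk_cay_walk[OF x0_closed] cay_walk_end_relator_conjugate[OF c x0_closed] c_eq by simp
  then show ?thesis
    using \<rho> pi1r_gen_cay_walk_conjugate[OF u] c_eq by auto
qed

lemma pres_equiv_if_cover_rel: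
  assumes w: "w \<in> lists (S \<times> UNIV)" and w': "w' \<in> lists (S \<times> UNIV)"
    and "cover_rel (Cay \<Gamma> S) r x0 (cay_walk \<Gamma> x0 w) (cay_walk \<Gamma> x0 w')"
  shows "pres_equiv cycle_relators w w'"
proof -
  obtain Cs where gens: "\<forall>C\<in>set Cs. pi1r_gen (Cay \<Gamma> S) r x0 C \<or> pi1r_gen (Cay \<Gamma> S) r x0 (rev_walk C)"
    and hom: "homotopic (cay_walk \<Gamma> x0 w @ rev_walk (cay_walk \<Gamma> x0 w')) (concat Cs)"
    using assms(3) unfolding cover_rel_def in_pi1r_def by blast
  have "pres_equiv {} (w @ rev_walk w') (concat (map walk_word Cs))"
    using pres_equiv_walk_word_if_homotopic[OF hom] by (simp add: walk_word_rev_walk walk_word_concat)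
  moreover have "set (map walk_word Cs) \<subseteq> relator_conjugates S cycle_relators"
    using gens walk_word_pi1r_gen rev_walk_relator_conjugates by (fastforce simp: walk_word_rev_walk)
  ultimately show ?thesis
    using pres_equiv_iff_conjugates[OF cycle_relators_in_lists w w'] by blast
qed

lemma in_pi1r_cay_walk:
  assumes v: "v \<in> lists (S \<times> UNIV)" and closed: "cay_walk_end \<Gamma> x0 v = x0"
    and cs: "set cs \<subseteq> relator_conjugates S cycle_relators" and free: "pres_equiv {} v (concat cs)"
  shows "in_pi1r (Cay \<Gamma> S) r x0 (cay_walk \<Gamma> x0 v)"
proof -
  have "concat cs \<in> lists (S \<times> UNIV)"
    using cs relator_conjugates_in_lists[OF cycle_relators_in_lists] by (induction cs) auto
  then have "homotopic (cay_walk \<Gamma> x0 v) (cay_walk \<Gamma> x0 (concat cs))"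
    using homotopic_cay_walk_if_pres_equiv[OF free] lists_S_carrier v x0_closed by blast
  moreover have "cay_walk \<Gamma> x0 (concat cs) = concat (map (cay_walk \<Gamma> x0) cs)"
    using cs
  proof (induction cs)
    case (Cons c cs)
    then show ?case
      using cay_walk_end_relator_conjugate[OF _ x0_closed] by (simp add: cay_walk_append)
  qed simp
  moreover have "\<forall>C\<in>set (map (cay_walk \<Gamma> x0) cs).
      pi1r_gen (Cay \<Gamma> S) r x0 C \<or> pi1r_gen (Cay \<Gamma> S) r x0 (rev_walk C)"
    using cs pi1r_gen_cay_walk by auto
  moreover have "walk (Cay \<Gamma> S) x0 (cay_walk \<Gamma> x0 v) x0"
    using walk_cay_walk[OF S_subset x0_closed v] closed by simp
  ultimately show ?thesis
    unfolding in_pi1r_def by metis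
qed

lemma cover_rel_if_pres_equiv:
  assumes w: "w \<in> lists (S \<times> UNIV)" and w': "w' \<in> lists (S \<times> UNIV)"
    and pe: "pres_equiv cycle_relators w w'"
  shows "cover_rel (Cay \<Gamma> S) r x0 (cay_walk \<Gamma> x0 w) (cay_walk \<Gamma> x0 w')"
proof -
  obtain cs where cs: "set cs \<subseteq> relator_conjugates S cycle_relators"
    and free: "pres_equiv {} (w @ rev_walk w') (concat cs)"
    using pres_equiv_iff_conjugates[OF cycle_relators_in_lists w w'] pe by blast
  define y where "y = cay_walk_end \<Gamma> x0 w'"
  have y: "y = cay_walk_end \<Gamma> x0 w"
    unfolding y_def using cay_walk_end_eq_if_pres_equiv_cycle_relators[OF pe w w' x0_closed] by simp
  have walks: "walk (Cay \<Gamma> S) x0 (cay_walk \<Gamma> x0 w) y" "walk (Cay \<Gamma> S) x0 (cay_walk \<Gamma> x0 w') y"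
    using walk_cay_walk[OF S_subset x0_closed w] walk_cay_walk[OF S_subset x0_closed w'] y y_def
    by simp_all
  have "cay_walk \<Gamma> x0 w @ rev_walk (cay_walk \<Gamma> x0 w') = cay_walk \<Gamma> x0 (w @ rev_walk w')"
    using rev_walk_cay_walk[OF x0_closed lists_S_carrier[OF w']] y y_def by (simp add: cay_walk_append)
  moreover have "cay_walk_end \<Gamma> x0 (w @ rev_walk w') = x0"
    using cay_walk_end_rev_walk[OF x0_closed lists_S_carrier[OF w']] y y_def
    by (simp add: cay_walk_end_append)
  then have "in_pi1r (Cay \<Gamma> S) r x0 (cay_walk \<Gamma> x0 (w @ rev_walk w'))"
    using in_pi1r_cay_walk[OF _ _ cs free] w w' by simp
  ultimately show ?thesis
    unfolding cover_rel_def using walks by auto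
qed

lemma cover_rel_cay_walk_iff:
  "w \<in> lists (S \<times> UNIV) \<Longrightarrow> w' \<in> lists (S \<times> UNIV) \<Longrightarrow>
    cover_rel (Cay \<Gamma> S) r x0 (cay_walk \<Gamma> x0 w) (cay_walk \<Gamma> x0 w') \<longleftrightarrow> pres_equiv cycle_relators w w'"
  using pres_equiv_if_cover_rel cover_rel_if_pres_equiv by blast

definition cover_vertex :: "('a \<times> bool) list \<Rightarrow> (('a \<times> 'a) \<times> bool) list set" where
  "cover_vertex w = cover_class (Cay \<Gamma> S) r x0 (cay_walk \<Gamma> x0 w)"

lemma mem_cover_vertex:
  assumes w: "w \<in> lists (S \<times> UNIV)"
  shows "W \<in> cover_vertex w \<longleftrightarrow>
    (\<exists>w' \<in> lists (S \<times> UNIV). W = cay_walk \<Gamma> x0 w' \<and> pres_equiv cycle_relators w w')"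
proof
  assume "W \<in> cover_vertex w"
  then have rel: "cover_rel (Cay \<Gamma> S) r x0 (cay_walk \<Gamma> x0 w) W"
    by (simp add: cover_vertex_def cover_class_def)
  then obtain y where "walk (Cay \<Gamma> S) x0 W y"
    unfolding cover_rel_def by blast
  then have "walk_word W \<in> lists (S \<times> UNIV)" "W = cay_walk \<Gamma> x0 (walk_word W)"
    using walk_CayD[OF S_subset] by blast+
  with rel show "\<exists>w' \<in> lists (S \<times> UNIV). W = cay_walk \<Gamma> x0 w' \<and> pres_equiv cycle_relators w w'"
    using cover_rel_cay_walk_iff[OF w] by metis
qed (use cover_rel_cay_walk_iff[OF w] in \<open>auto simp: cover_vertex_def cover_class_def\<close>)

lemma cay_walk_in_cover_vertex: "w \<in> lists (S \<times> UNIV) \<Longrightarrow> cay_walk \<Gamma> x0 w \<in> cover_vertex w"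
  using mem_cover_vertex by auto

lemma cover_vertex_eq_iff:
  assumes w: "w \<in> lists (S \<times> UNIV)" and w': "w' \<in> lists (S \<times> UNIV)"
  shows "cover_vertex w = cover_vertex w' \<longleftrightarrow> pres_equiv cycle_relators w w'"
proof
  assume "cover_vertex w = cover_vertex w'"
  then have "cay_walk \<Gamma> x0 w' \<in> cover_vertex w"
    using cay_walk_in_cover_vertex[OF w'] by simp
  then show "pres_equiv cycle_relators w w'"
    using mem_cover_vertex[OF w] walk_word_cay_walk by metis
next
  assume "pres_equiv cycle_relators w w'"
  then show "cover_vertex w = cover_vertex w'"
    using mem_cover_vertex[OF w] mem_cover_vertex[OF w'] pres_equiv_sym pres_equiv_trans by blast
qed

definition cover_rep :: "(('a \<times> 'a) \<times> bool) list set \<Rightarrow> ('a \<times> bool) list" where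
  "cover_rep C = (SOME w. w \<in> lists (S \<times> UNIV) \<and> cover_vertex w = C)"

lemma cover_rep:
  assumes "w \<in> lists (S \<times> UNIV)"
  shows "cover_rep (cover_vertex w) \<in> lists (S \<times> UNIV)"
    and "pres_equiv cycle_relators (cover_rep (cover_vertex w)) w"
proof -
  have "cover_rep (cover_vertex w) \<in> lists (S \<times> UNIV) \<and> cover_vertex (cover_rep (cover_vertex w)) = cover_vertex w"
    unfolding cover_rep_def by (rule someI[of _ w]) (simp add: assms)
  then show "cover_rep (cover_vertex w) \<in> lists (S \<times> UNIV)"
    and "pres_equiv cycle_relators (cover_rep (cover_vertex w)) w"
    using cover_vertex_eq_iff assms by blast+
qed

definition cover_group :: "((('a \<times> 'a) \<times> bool) list set) monoid" where
  "cover_group = \<lparr>carrier = cover_vertex ` lists (S \<times> UNIV),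
     monoid.mult = (\<lambda>C D. cover_vertex (cover_rep C @ cover_rep D)), one = cover_vertex []\<rparr>"

lemma cover_vertex_mult:
  assumes "a \<in> lists (S \<times> UNIV)" and "b \<in> lists (S \<times> UNIV)"
  shows "cover_vertex a \<otimes>\<^bsub>cover_group\<^esub> cover_vertex b = cover_vertex (a @ b)"
proof -
  have "pres_equiv cycle_relators (cover_rep (cover_vertex a) @ cover_rep (cover_vertex b)) (a @ b)"
    using cover_rep assms by (blast intro: pres_equiv_append)
  then show ?thesis
    using cover_vertex_eq_iff cover_rep assms by (simp add: cover_group_def)
qed

lemma carrier_cover_group: "carrier cover_group = cover_vertex ` lists (S \<times> UNIV)"
  and one_cover_group: "\<one>\<^bsub>cover_group\<^esub> = cover_vertex []"
  by (simp_all add: cover_group_def)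

lemma group_cover_group: "group cover_group"
proof (rule groupI)
  fix C D
  assume "C \<in> carrier cover_group" "D \<in> carrier cover_group"
  then obtain a b where "a \<in> lists (S \<times> UNIV)" "b \<in> lists (S \<times> UNIV)" "C = cover_vertex a" "D = cover_vertex b"
    by (auto simp: carrier_cover_group)
  then show "C \<otimes>\<^bsub>cover_group\<^esub> D \<in> carrier cover_group"
    by (simp add: cover_vertex_mult carrier_cover_group)
next
  fix C D E
  assume "C \<in> carrier cover_group" "D \<in> carrier cover_group" "E \<in> carrier cover_group"
  then obtain a b c where "a \<in> lists (S \<times> UNIV)" "b \<in> lists (S \<times> UNIV)" "c \<in> lists (S \<times> UNIV)"
    "C = cover_vertex a" "D = cover_vertex b" "E = cover_vertex c"
    by (auto simp: carrier_cover_group)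
  then show "C \<otimes>\<^bsub>cover_group\<^esub> D \<otimes>\<^bsub>cover_group\<^esub> E = C \<otimes>\<^bsub>cover_group\<^esub> (D \<otimes>\<^bsub>cover_group\<^esub> E)"
    by (simp add: cover_vertex_mult)
next
  fix C
  assume "C \<in> carrier cover_group"
  then obtain a where a: "a \<in> lists (S \<times> UNIV)" "C = cover_vertex a"
    by (auto simp: carrier_cover_group)
  then show "\<one>\<^bsub>cover_group\<^esub> \<otimes>\<^bsub>cover_group\<^esub> C = C"
    using cover_vertex_mult[of "[]" a] by (simp add: one_cover_group)
  have "pres_equiv cycle_relators (rev_walk a @ a) []"
    by (rule pres_equiv_rev_walk_append)
  then have "cover_vertex (rev_walk a) \<otimes>\<^bsub>cover_group\<^esub> C = \<one>\<^bsub>cover_group\<^esub>"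
    using a cover_vertex_mult cover_vertex_eq_iff by (simp add: one_cover_group)
  moreover have "cover_vertex (rev_walk a) \<in> carrier cover_group"
    using a by (simp add: carrier_cover_group)
  ultimately show "\<exists>D \<in> carrier cover_group. D \<otimes>\<^bsub>cover_group\<^esub> C = \<one>\<^bsub>cover_group\<^esub>"
    by blast
qed (simp add: carrier_cover_group one_cover_group)

definition cover_gen :: "'a \<Rightarrow> (('a \<times> 'a) \<times> bool) list set" where
  "cover_gen s = cover_vertex [(s, True)]"

lemma cover_gen_closed: "s \<in> S \<Longrightarrow> cover_gen s \<in> carrier cover_group"
  by (auto simp: cover_gen_def carrier_cover_group)

lemma inv_cover_vertex:
  assumes "w \<in> lists (S \<times> UNIV)"
  shows "inv\<^bsub>cover_group\<^esub> cover_vertex w = cover_vertex (rev_walk w)"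
proof (rule group.inv_equality[OF group_cover_group])
  show "cover_vertex (rev_walk w) \<otimes>\<^bsub>cover_group\<^esub> cover_vertex w = \<one>\<^bsub>cover_group\<^esub>"
    using assms cover_vertex_mult cover_vertex_eq_iff pres_equiv_rev_walk_append
    by (simp add: one_cover_group)
qed (use assms in \<open>simp_all add: carrier_cover_group\<close>)

lemma word_eval_cover_group:
  "w \<in> lists (S \<times> UNIV) \<Longrightarrow> word_eval cover_group (map (apfst cover_gen) w) = cover_vertex w"
proof (induction w rule: word_induct)
  case Nil
  then show ?case
    by (simp add: group.word_eval_Nil[OF group_cover_group] one_cover_group)
next
  case (Pos s w)
  then show ?case
    using cover_vertex_mult[of "[(s, True)]" w]
    by (simp add: group.word_eval_Cons[OF group_cover_group] cover_gen_def)
next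
  case (Neg s w)
  then show ?case
    using cover_vertex_mult[of "[(s, False)]" w] inv_cover_vertex[of "[(s, True)]"]
    by (simp add: group.word_eval_Cons[OF group_cover_group] cover_gen_def rev_walk_def flip_def)
qed

lemma cover_gen_generates:
  "C \<in> carrier cover_group \<Longrightarrow> \<exists>w \<in> lists (cover_gen ` S \<times> UNIV). word_eval cover_group w = C"
proof -
  assume "C \<in> carrier cover_group"
  then obtain w where "w \<in> lists (S \<times> UNIV)" "C = cover_vertex w"
    by (auto simp: carrier_cover_group)
  then show ?thesis
    using word_eval_cover_group map_apfst_in_lists by blast
qed

lemma inj_on_cover_gen: "inj_on cover_gen S"
proof (rule inj_onI)
  fix s t
  assume st: "s \<in> S" "t \<in> S" "cover_gen s = cover_gen t"
  then have "pres_equiv cycle_relators [(s, True)] [(t, True)]"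
    using cover_vertex_eq_iff by (simp add: cover_gen_def)
  then have "word_eval \<Gamma> [(s, True)] = word_eval \<Gamma> [(t, True)]"
    by (rule word_eval_eq_if_pres_equiv_cycle_relators) (use st in auto)
  then show "s = t"
    using st S_subset by (auto simp: subsetD)
qed

lemma word_eval_cover_group_eq_iff:
  assumes w: "w \<in> lists (cover_gen ` S \<times> UNIV)" and w': "w' \<in> lists (cover_gen ` S \<times> UNIV)"
  shows "word_eval cover_group w = word_eval cover_group w'
    \<longleftrightarrow> pres_equiv (map (apfst cover_gen) ` cycle_relators) w w'"
proof -
  let ?name = "map (apfst (inv_into S cover_gen))"
  have "apfst (inv_into S cover_gen) x \<in> S \<times> UNIV \<and> apfst cover_gen (apfst (inv_into S cover_gen) x) = x"
    if "x \<in> cover_gen ` S \<times> UNIV" for x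
    using that by (cases x) (simp add: inv_into_into f_inv_into_f)
  then have named: "?name v \<in> lists (S \<times> UNIV)" "map (apfst cover_gen) (?name v) = v"
    if "v \<in> lists (cover_gen ` S \<times> UNIV)" for v :: "((('a \<times> 'a) \<times> bool) list set \<times> bool) list"
    using that by (induction v) auto
  have "?name (map (apfst cover_gen) \<rho>) = \<rho>" if "\<rho> \<in> lists (S \<times> UNIV)" for \<rho>
    using that by (induction \<rho>) (auto simp: inv_into_f_f[OF inj_on_cover_gen])
  then have "\<forall>\<rho> \<in> cycle_relators. ?name (map (apfst cover_gen) \<rho>) = \<rho>"
    using cycle_relators_in_lists by blast
  then have relators: "?name ` map (apfst cover_gen) ` cycle_relators = cycle_relators"
    by (simp add: image_image cong: image_cong)
  have "word_eval cover_group w = cover_vertex (?name w)" "word_eval cover_group w' = cover_vertex (?name w')"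
    using word_eval_cover_group[OF named(1)] named(2) w w' by simp_all
  then have "word_eval cover_group w = word_eval cover_group w'
      \<longleftrightarrow> pres_equiv cycle_relators (?name w) (?name w')"
    using cover_vertex_eq_iff[OF named(1)[OF w] named(1)[OF w']] by simp
  also have "\<dots> \<longleftrightarrow> pres_equiv (map (apfst cover_gen) ` cycle_relators) w w'"
  proof
    assume "pres_equiv cycle_relators (?name w) (?name w')"
    then show "pres_equiv (map (apfst cover_gen) ` cycle_relators) w w'"
      using pres_equiv_map[where f = "apfst cover_gen", OF apfst_flip] named(2) w w' by metis
  next
    assume "pres_equiv (map (apfst cover_gen) ` cycle_relators) w w'"
    then show "pres_equiv cycle_relators (?name w) (?name w')"
      using pres_equiv_map[where f = "apfst (inv_into S cover_gen)", OF apfst_flip] relators by metis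
  qed
  finally show ?thesis .
qed

lemma finitely_presented_cover_group:
  assumes "finite S"
  shows "finitely_presented cover_group"
proof -
  let ?A = "cover_gen ` S" and ?R = "map (apfst cover_gen) ` cycle_relators"
  have "\<rho> \<in> lists (?A \<times> UNIV)" if "\<rho> \<in> ?R" for \<rho>
    using that cycle_relators_in_lists map_apfst_in_lists by blast
  moreover have "\<exists>w. set w \<subseteq> ?A \<times> UNIV \<and> word_eval cover_group w = C" if "C \<in> carrier cover_group" for C
    using cover_gen_generates[OF that] by (auto simp: lists_eq_set)
  moreover have "finite ?A" "finite ?R"
    using assms finite_cycle_relators by simp_all
  moreover have "?A \<subseteq> carrier cover_group"
    using cover_gen_closed by blast
  ultimately show ?thesis
    unfolding finitely_presented_def using word_eval_cover_group_eq_iff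
    by (intro exI[of _ ?A] exI[of _ ?R]) (auto simp: lists_eq_set)
qed

definition cover_projection :: "(('a \<times> 'a) \<times> bool) list set \<Rightarrow> 'a" where
  "cover_projection C = word_eval \<Gamma> (cover_rep C)"

lemma cover_projection_cover_vertex:
  "w \<in> lists (S \<times> UNIV) \<Longrightarrow> cover_projection (cover_vertex w) = word_eval \<Gamma> w"
  unfolding cover_projection_def using cover_rep word_eval_eq_if_pres_equiv_cycle_relators by blast

lemma cover_projection_hom: "cover_projection \<in> hom cover_group \<Gamma>"
proof (rule homI)
  fix C assume "C \<in> carrier cover_group"
  then obtain a where "a \<in> lists (S \<times> UNIV)" "C = cover_vertex a"
    by (auto simp: carrier_cover_group)
  then show "cover_projection C \<in> carrier \<Gamma>"
    using cover_projection_cover_vertex word_eval_closed[OF lists_S_carrier] by simp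
next
  fix C D
  assume "C \<in> carrier cover_group" "D \<in> carrier cover_group"
  then obtain a b where ab: "a \<in> lists (S \<times> UNIV)" "b \<in> lists (S \<times> UNIV)"
    and "C = cover_vertex a" "D = cover_vertex b"
    by (auto simp: carrier_cover_group)
  then show "cover_projection (C \<otimes>\<^bsub>cover_group\<^esub> D) = cover_projection C \<otimes> cover_projection D"
    using word_eval_append[OF lists_S_carrier[OF ab(1)] lists_S_carrier[OF ab(2)]]
    by (simp add: cover_vertex_mult cover_projection_cover_vertex)
qed

lemma cover_projection_surj:
  assumes "connected_graph (Cay \<Gamma> S)"
  shows "cover_projection ` carrier cover_group = carrier \<Gamma>"
proof
  show "cover_projection ` carrier cover_group \<subseteq> carrier \<Gamma>"
    using cover_projection_hom by (auto simp: hom_def)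
next
  show "carrier \<Gamma> \<subseteq> cover_projection ` carrier cover_group"
  proof
    fix g
    assume g: "g \<in> carrier \<Gamma>"
    then obtain W where "walk (Cay \<Gamma> S) \<one> W g"
      using assms by (auto simp: connected_graph_def Cay_def)
    then have w: "walk_word W \<in> lists (S \<times> UNIV)" and "g = cay_walk_end \<Gamma> \<one> (walk_word W)"
      using walk_CayD[OF S_subset] by blast+
    then have "g = cover_projection (cover_vertex (walk_word W))"
      using cay_walk_end_eq[OF one_closed lists_S_carrier[OF w]] cover_projection_cover_vertex[OF w]
        word_eval_closed[OF lists_S_carrier[OF w]] by simp
    then show "g \<in> cover_projection ` carrier cover_group"
      using w by (auto simp: carrier_cover_group)
  qed
qed

lemma cay_walk_end_eq_if_cover_vertex_eq:
  "cover_vertex w = cover_vertex w' \<Longrightarrow> w \<in> lists (S \<times> UNIV) \<Longrightarrow> w' \<in> lists (S \<times> UNIV) \<Longrightarrow>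
    cay_walk_end \<Gamma> x0 w = cay_walk_end \<Gamma> x0 w'"
  using cover_vertex_eq_iff cay_walk_end_eq_if_pres_equiv_cycle_relators x0_closed by blast

lemma cover_class_walk:
  assumes "walk (Cay \<Gamma> S) x0 W y"
  shows "walk_word W \<in> lists (S \<times> UNIV)" and "cover_class (Cay \<Gamma> S) r x0 W = cover_vertex (walk_word W)"
  using walk_CayD[OF S_subset assms] by (auto simp: cover_vertex_def)

lemma verts_local_cover: "verts (local_cover (Cay \<Gamma> S) r x0) = carrier cover_group"
proof -
  have "{cover_class (Cay \<Gamma> S) r x0 W | W. \<exists>y. walk (Cay \<Gamma> S) x0 W y} = cover_vertex ` lists (S \<times> UNIV)"
  proof (intro equalityI subsetI)
    fix C
    assume "C \<in> {cover_class (Cay \<Gamma> S) r x0 W | W. \<exists>y. walk (Cay \<Gamma> S) x0 W y}"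
    then show "C \<in> cover_vertex ` lists (S \<times> UNIV)"
      using cover_class_walk by blast
  next
    fix C
    assume "C \<in> cover_vertex ` lists (S \<times> UNIV)"
    then show "C \<in> {cover_class (Cay \<Gamma> S) r x0 W | W. \<exists>y. walk (Cay \<Gamma> S) x0 W y}"
      using walk_cay_walk[OF S_subset x0_closed] by (auto simp: cover_vertex_def)
  qed
  then show ?thesis
    by (simp add: local_cover_def carrier_cover_group)
qed

lemma edges_local_cover:
  "(C, e) \<in> edges (local_cover (Cay \<Gamma> S) r x0) \<longleftrightarrow>
    (\<exists>w \<in> lists (S \<times> UNIV). \<exists>s \<in> S. C = cover_vertex w \<and> e = (cay_walk_end \<Gamma> x0 w, s))"
proof
  assume edge: "(C, e) \<in> edges (local_cover (Cay \<Gamma> S) r x0)"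
  obtain a s where e_eq: "e = (a, s)"
    by (cases e)
  obtain W y W' where W: "walk (Cay \<Gamma> S) x0 W y" "C = cover_class (Cay \<Gamma> S) r x0 W"
    and e: "e = (a, s)" "a \<in> carrier \<Gamma>" "s \<in> S" and W': "W' \<in> C" "walk (Cay \<Gamma> S) x0 W' a"
    using edge unfolding e_eq by (simp add: local_cover_def Cay_def) blast
  have w: "walk_word W \<in> lists (S \<times> UNIV)" "C = cover_vertex (walk_word W)"
    using cover_class_walk[OF W(1)] W(2) by simp_all
  obtain w' where w': "w' \<in> lists (S \<times> UNIV)" "W' = cay_walk \<Gamma> x0 w'" "pres_equiv cycle_relators (walk_word W) w'"
    using W'(1) mem_cover_vertex w by blast
  have "a = cay_walk_end \<Gamma> x0 w'"
    using walk_CayD[OF S_subset W'(2)] w'(2) by simp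
  also have "\<dots> = cay_walk_end \<Gamma> x0 (walk_word W)"
    using cay_walk_end_eq_if_pres_equiv_cycle_relators[OF w'(3) w(1) w'(1) x0_closed] by simp
  finally show "\<exists>w \<in> lists (S \<times> UNIV). \<exists>s \<in> S. C = cover_vertex w \<and> e = (cay_walk_end \<Gamma> x0 w, s)"
    using w e by blast
next
  assume "\<exists>w \<in> lists (S \<times> UNIV). \<exists>s \<in> S. C = cover_vertex w \<and> e = (cay_walk_end \<Gamma> x0 w, s)"
  then obtain w s where w: "w \<in> lists (S \<times> UNIV)" "s \<in> S" "C = cover_vertex w"
    "e = (cay_walk_end \<Gamma> x0 w, s)"
    by blast
  moreover have "walk (Cay \<Gamma> S) x0 (cay_walk \<Gamma> x0 w) (cay_walk_end \<Gamma> x0 w)"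
    using walk_cay_walk[OF S_subset x0_closed w(1)] .
  moreover have "cay_walk_end \<Gamma> x0 w \<in> carrier \<Gamma>"
    using cay_walk_end_closed[OF x0_closed lists_S_carrier[OF w(1)]] .
  ultimately show "(C, e) \<in> edges (local_cover (Cay \<Gamma> S) r x0)"
    using cay_walk_in_cover_vertex[OF w(1)] by (auto simp: local_cover_def cover_vertex_def)
qed

lemma cover_class_append_edge:
  assumes w: "w \<in> lists (S \<times> UNIV)" and s: "s \<in> S" and W: "W \<in> cover_vertex w"
  shows "cover_class (Cay \<Gamma> S) r x0 (W @ [((cay_walk_end \<Gamma> x0 w, s), True)]) = cover_vertex (w @ [(s, True)])"
proof -
  obtain w1 where w1: "w1 \<in> lists (S \<times> UNIV)" "W = cay_walk \<Gamma> x0 w1" "pres_equiv cycle_relators w w1"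
    using W mem_cover_vertex[OF w] by blast
  have "cay_walk_end \<Gamma> x0 w1 = cay_walk_end \<Gamma> x0 w"
    using cay_walk_end_eq_if_pres_equiv_cycle_relators[OF w1(3) w w1(1) x0_closed] by simp
  then have "W @ [((cay_walk_end \<Gamma> x0 w, s), True)] = cay_walk \<Gamma> x0 (w1 @ [(s, True)])"
    using w1(2) by (simp add: cay_walk_append)
  moreover have "pres_equiv cycle_relators (w1 @ [(s, True)]) (w @ [(s, True)])"
    using pres_equiv_append[OF pres_equiv_sym[OF w1(3)] pres_equiv_refl] .
  then have "cover_vertex (w1 @ [(s, True)]) = cover_vertex (w @ [(s, True)])"
    using cover_vertex_eq_iff[THEN iffD2] w w1(1) s by simp
  ultimately show ?thesis
    by (simp add: cover_vertex_def)
qed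

lemma ends_local_cover:
  assumes w: "w \<in> lists (S \<times> UNIV)" and s: "s \<in> S"
  shows "ends (local_cover (Cay \<Gamma> S) r x0) (cover_vertex w, (cay_walk_end \<Gamma> x0 w, s))
    = (cover_vertex w, cover_vertex (w @ [(s, True)]))"
proof -
  let ?E = "[((cay_walk_end \<Gamma> x0 w, s), True)]"
  have "{W'. \<exists>W \<in> cover_vertex w. walk (Cay \<Gamma> S) x0 W (cay_walk_end \<Gamma> x0 w)
      \<and> cover_rel (Cay \<Gamma> S) r x0 (W @ ?E) W'} = cover_vertex (w @ [(s, True)])"
  proof (intro equalityI subsetI)
    fix W'
    assume "W' \<in> {W'. \<exists>W \<in> cover_vertex w. walk (Cay \<Gamma> S) x0 W (cay_walk_end \<Gamma> x0 w)
      \<and> cover_rel (Cay \<Gamma> S) r x0 (W @ ?E) W'}"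
    then obtain W where "W \<in> cover_vertex w" "W' \<in> cover_class (Cay \<Gamma> S) r x0 (W @ ?E)"
      by (auto simp: cover_class_def)
    then show "W' \<in> cover_vertex (w @ [(s, True)])"
      using cover_class_append_edge[OF w s] by blast
  next
    fix W'
    assume "W' \<in> cover_vertex (w @ [(s, True)])"
    then have "W' \<in> cover_class (Cay \<Gamma> S) r x0 (cay_walk \<Gamma> x0 w @ ?E)"
      using cover_class_append_edge[OF w s cay_walk_in_cover_vertex[OF w]] by simp
    then show "W' \<in> {W'. \<exists>W \<in> cover_vertex w. walk (Cay \<Gamma> S) x0 W (cay_walk_end \<Gamma> x0 w)
      \<and> cover_rel (Cay \<Gamma> S) r x0 (W @ ?E) W'}"
      using cay_walk_in_cover_vertex[OF w] walk_cay_walk[OF S_subset x0_closed w]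
      by (auto simp: cover_class_def)
  qed
  then show ?thesis
    by (simp add: local_cover_def)
qed

lemma edges_local_coverE:
  assumes "E \<in> edges (local_cover (Cay \<Gamma> S) r x0)"
  obtains w s where "w \<in> lists (S \<times> UNIV)" "s \<in> S" "E = (cover_vertex w, (cay_walk_end \<Gamma> x0 w, s))"
  using assms edges_local_cover by (cases E) blast

text \<open>Edges of the \<open>r\<close>-local cover are the lifts \<open>(C, (g, s))\<close> of edges \<open>(g, s)\<close> of \<open>Cay(\<Gamma>, S)\<close>
  at vertices \<open>C\<close>.\<close>
definition relabel_cover_edge ::
    "(('a \<times> 'a) \<times> bool) list set \<times> ('a \<times> 'a) \<Rightarrow> (('a \<times> 'a) \<times> bool) list set \<times> (('a \<times> 'a) \<times> bool) list set"
  where "relabel_cover_edge = (\<lambda>(C, e). (C, cover_gen (snd e)))"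

lemma inj_on_relabel_cover_edge: "inj_on relabel_cover_edge (edges (local_cover (Cay \<Gamma> S) r x0))"
proof (rule inj_onI)
  fix x y
  assume "x \<in> edges (local_cover (Cay \<Gamma> S) r x0)" "y \<in> edges (local_cover (Cay \<Gamma> S) r x0)"
    and eq: "relabel_cover_edge x = relabel_cover_edge y"
  then obtain w s w' t where w: "w \<in> lists (S \<times> UNIV)" "s \<in> S"
    "x = (cover_vertex w, (cay_walk_end \<Gamma> x0 w, s))" and w': "w' \<in> lists (S \<times> UNIV)" "t \<in> S"
    "y = (cover_vertex w', (cay_walk_end \<Gamma> x0 w', t))"
    by (elim edges_local_coverE)
  with eq have "cover_vertex w = cover_vertex w'" "s = t"
    using inj_onD[OF inj_on_cover_gen] by (auto simp: relabel_cover_edge_def)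
  moreover from this(1) have "cay_walk_end \<Gamma> x0 w = cay_walk_end \<Gamma> x0 w'"
    by (rule cay_walk_end_eq_if_cover_vertex_eq[OF _ w(1) w'(1)])
  ultimately show "x = y"
    using w w' by simp
qed

lemma relabel_cover_edge_image:
  "relabel_cover_edge ` edges (local_cover (Cay \<Gamma> S) r x0) = edges (Cay cover_group (cover_gen ` S))"
proof (intro equalityI subsetI)
  fix x
  assume "x \<in> relabel_cover_edge ` edges (local_cover (Cay \<Gamma> S) r x0)"
  then obtain E where "E \<in> edges (local_cover (Cay \<Gamma> S) r x0)" "x = relabel_cover_edge E"
    by blast
  moreover from this(1) obtain w s where "w \<in> lists (S \<times> UNIV)" "s \<in> S"
    "E = (cover_vertex w, (cay_walk_end \<Gamma> x0 w, s))"
    by (rule edges_local_coverE)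
  ultimately show "x \<in> edges (Cay cover_group (cover_gen ` S))"
    by (auto simp: carrier_cover_group relabel_cover_edge_def)
next
  fix x
  assume "x \<in> edges (Cay cover_group (cover_gen ` S))"
  then obtain w s where "w \<in> lists (S \<times> UNIV)" "s \<in> S" "x = (cover_vertex w, cover_gen s)"
    by (auto simp: carrier_cover_group)
  then have "x = relabel_cover_edge (cover_vertex w, (cay_walk_end \<Gamma> x0 w, s))"
    and "(cover_vertex w, (cay_walk_end \<Gamma> x0 w, s)) \<in> edges (local_cover (Cay \<Gamma> S) r x0)"
    by (auto simp: edges_local_cover relabel_cover_edge_def)
  then show "x \<in> relabel_cover_edge ` edges (local_cover (Cay \<Gamma> S) r x0)"
    by blast
qed

lemma ends_relabel_cover_edge:
  assumes "x \<in> edges (local_cover (Cay \<Gamma> S) r x0)"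
  shows "ends (Cay cover_group (cover_gen ` S)) (relabel_cover_edge x) = ends (local_cover (Cay \<Gamma> S) r x0) x"
proof -
  obtain w s where ws: "w \<in> lists (S \<times> UNIV)" "s \<in> S"
    and x: "x = (cover_vertex w, (cay_walk_end \<Gamma> x0 w, s))"
    using assms by (rule edges_local_coverE)
  have "ends (Cay cover_group (cover_gen ` S)) (relabel_cover_edge x)
      = (cover_vertex w, cover_vertex (w @ [(s, True)]))"
    using cover_vertex_mult[OF ws(1), of "[(s, True)]"] ws x
    by (simp add: cover_gen_def relabel_cover_edge_def)
  then show ?thesis
    using ends_local_cover[OF ws] x by simp
qed

lemma mg_iso_local_cover_Cay: "mg_iso (local_cover (Cay \<Gamma> S) r x0) (Cay cover_group (cover_gen ` S))"
  unfolding mg_iso_def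
proof (intro exI conjI ballI)
  show "bij_betw id (verts (local_cover (Cay \<Gamma> S) r x0)) (verts (Cay cover_group (cover_gen ` S)))"
    unfolding verts_local_cover by simp
  show "bij_betw relabel_cover_edge (edges (local_cover (Cay \<Gamma> S) r x0))
      (edges (Cay cover_group (cover_gen ` S)))"
    unfolding bij_betw_def using inj_on_relabel_cover_edge relabel_cover_edge_image ..
qed (simp add: ends_relabel_cover_edge)

end

theorem theorem4p10:
  fixes \<Gamma> :: "'a monoid" and S :: "'a set" and r :: nat and x0 :: 'a
  assumes "group \<Gamma>"
    and "S \<subseteq> carrier \<Gamma>"
    and "connected_graph (Cay \<Gamma> S)"
    and "locally_finite (Cay \<Gamma> S)"
    and "x0 \<in> carrier \<Gamma>"
  shows "\<exists>(\<Gamma>r :: ((('a \<times> 'a) \<times> bool) list set) monoid) Sr.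
           group \<Gamma>r \<and> Sr \<subseteq> carrier \<Gamma>r \<and> finitely_presented \<Gamma>r
         \<and> connected_graph (Cay \<Gamma>r Sr) \<and> locally_finite (Cay \<Gamma>r Sr)
         \<and> mg_iso (local_cover (Cay \<Gamma> S) r x0) (Cay \<Gamma>r Sr)
         \<and> (\<exists>h. h \<in> hom \<Gamma>r \<Gamma> \<and> h ` carrier \<Gamma>r = carrier \<Gamma>)"
proof -
  interpret cayley_local_cover \<Gamma> S r x0
    using assms by (simp add: cayley_local_cover_def cayley_local_cover_axioms_def)
  have "finite S"
    using finite_if_locally_finite_Cay assms(4,5) .
  have gens: "cover_gen ` S \<subseteq> carrier cover_group"
    using cover_gen_closed by blast
  show ?thesis
  proof (intro exI conjI)
    show "group cover_group" "finitely_presented cover_group"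
      using group_cover_group finitely_presented_cover_group[OF \<open>finite S\<close>] .
    show "connected_graph (Cay cover_group (cover_gen ` S))"
      using group.connected_Cay_if_generates[OF group_cover_group gens] cover_gen_generates by blast
    show "locally_finite (Cay cover_group (cover_gen ` S))"
      using group.locally_finite_Cay[OF group_cover_group gens] \<open>finite S\<close> by blast
    show "cover_projection \<in> hom cover_group \<Gamma>" "cover_projection ` carrier cover_group = carrier \<Gamma>"
      using cover_projection_hom cover_projection_surj[OF assms(3)] .
    show "cover_gen ` S \<subseteq> carrier cover_group"
      by (rule gens)
    show "mg_iso (local_cover (Cay \<Gamma> S) r x0) (Cay cover_group (cover_gen ` S))"
      by (rule mg_iso_local_cover_Cay)
  qed
qed

end
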